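(* Let $G$ be a finite nonabelian group. Then $\mathcal{X}=\bigcup_{g\in G\setminus Z(G)}\mathrm{Irr}(G/[g,G])$, and consequently $K(G)=\bigcap_{g\in G\setminus Z(G)}[g,G]$.
   Context: For $\chi\in\mathrm{Irr}(G)$, the center of $\chi$ is $Z(\chi)=\{g\in G : |\chi(g)|=\chi(1)\}$. Let $\mathcal{X}=\{\chi\in\mathrm{Irr}(G) : Z(\chi)>Z(G)\}$ (strict containment) and $K(G)=\bigcap_{\chi\in\mathcal{X}}\ker(\chi)$. For $g\in G$, $[g,G]$ is the subgroup generated by $\{[g,x] : x\in G\}$; it is normal in $G$. $\mathrm{Irr}(G/[g,G])$ is identified with the set of $\chi\in\mathrm{Irr}(G)$ with $[g,G]\le\ker(\chi)$. *)

theory Defs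
  imports "HOL-Algebra.Group" "HOL-Algebra.Generated_Groups" "Jordan_Normal_Form.Matrix"
begin

definition grp_center :: "('a, 'b) monoid_scheme \<Rightarrow> 'a set" where
  "grp_center G = {z \<in> carrier G. \<forall>x \<in> carrier G. z \<otimes>\<^bsub>G\<^esub> x = x \<otimes>\<^bsub>G\<^esub> z}"

definition grp_comm :: "('a, 'b) monoid_scheme \<Rightarrow> 'a \<Rightarrow> 'a \<Rightarrow> 'a" where
  "grp_comm G g x = inv\<^bsub>G\<^esub> g \<otimes>\<^bsub>G\<^esub> inv\<^bsub>G\<^esub> x \<otimes>\<^bsub>G\<^esub> g \<otimes>\<^bsub>G\<^esub> x"

definition comm_sub :: "('a, 'b) monoid_scheme \<Rightarrow> 'a \<Rightarrow> 'a set" where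
  "comm_sub G g = generate G {grp_comm G g x | x. x \<in> carrier G}"

definition is_rep :: "('a, 'b) monoid_scheme \<Rightarrow> nat \<Rightarrow> ('a \<Rightarrow> complex mat) \<Rightarrow> bool" where
  "is_rep G n \<rho> \<longleftrightarrow>
     (\<forall>g \<in> carrier G. \<rho> g \<in> carrier_mat n n) \<and>
     \<rho> \<one>\<^bsub>G\<^esub> = 1\<^sub>m n \<and>
     (\<forall>g \<in> carrier G. \<forall>h \<in> carrier G. \<rho> (g \<otimes>\<^bsub>G\<^esub> h) = \<rho> g * \<rho> h)"

definition invariant_subspace :: "('a, 'b) monoid_scheme \<Rightarrow> nat \<Rightarrow> ('a \<Rightarrow> complex mat) \<Rightarrow> complex vec set \<Rightarrow> bool" where
  "invariant_subspace G n \<rho> W \<longleftrightarrow>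
     W \<subseteq> carrier_vec n \<and> 0\<^sub>v n \<in> W \<and>
     (\<forall>v \<in> W. \<forall>w \<in> W. v + w \<in> W) \<and>
     (\<forall>c. \<forall>v \<in> W. c \<cdot>\<^sub>v v \<in> W) \<and>
     (\<forall>g \<in> carrier G. \<forall>w \<in> W. \<rho> g *\<^sub>v w \<in> W)"

definition irreducible_rep :: "('a, 'b) monoid_scheme \<Rightarrow> nat \<Rightarrow> ('a \<Rightarrow> complex mat) \<Rightarrow> bool" where
  "irreducible_rep G n \<rho> \<longleftrightarrow> is_rep G n \<rho> \<and> n > 0 \<and>
     (\<forall>W. invariant_subspace G n \<rho> W \<longrightarrow> W = {0\<^sub>v n} \<or> W = carrier_vec n)"

definition mat_trace :: "complex mat \<Rightarrow> complex" where
  "mat_trace A = (\<Sum>i < dim_row A. A $$ (i, i))"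

definition character :: "('a, 'b) monoid_scheme \<Rightarrow> ('a \<Rightarrow> complex mat) \<Rightarrow> 'a \<Rightarrow> complex" where
  "character G \<rho> = (\<lambda>g. if g \<in> carrier G then mat_trace (\<rho> g) else 0)"

definition Irr :: "('a, 'b) monoid_scheme \<Rightarrow> ('a \<Rightarrow> complex) set" where
  "Irr G = {\<chi>. \<exists>n \<rho>. irreducible_rep G n \<rho> \<and> \<chi> = character G \<rho>}"

definition char_ker :: "('a, 'b) monoid_scheme \<Rightarrow> ('a \<Rightarrow> complex) \<Rightarrow> 'a set" where
  "char_ker G \<chi> = {g \<in> carrier G. \<chi> g = \<chi> \<one>\<^bsub>G\<^esub>}"

definition char_center :: "('a, 'b) monoid_scheme \<Rightarrow> ('a \<Rightarrow> complex) \<Rightarrow> 'a set" where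
  "char_center G \<chi> = {g \<in> carrier G. complex_of_real (cmod (\<chi> g)) = \<chi> \<one>\<^bsub>G\<^esub>}"

definition Xset :: "('a, 'b) monoid_scheme \<Rightarrow> ('a \<Rightarrow> complex) set" where
  "Xset G = {\<chi> \<in> Irr G. grp_center G \<subset> char_center G \<chi>}"

definition K_grp :: "('a, 'b) monoid_scheme \<Rightarrow> 'a set" where
  "K_grp G = carrier G \<inter> (\<Inter>\<chi> \<in> Xset G. char_ker G \<chi>)"

(* Irr(G/N) identified with characters whose kernel contains N *)
definition Irr_quot :: "('a, 'b) monoid_scheme \<Rightarrow> 'a set \<Rightarrow> ('a \<Rightarrow> complex) set" where
  "Irr_quot G N = {\<chi> \<in> Irr G. N \<subseteq> char_ker G \<chi>}"

end

(*
  For an irreducible representation \<rho> affording \<chi>, every \<rho>(g) has finite order, so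
  |\<chi>(g)| = \<chi>(1) forces all eigenvalues of \<rho>(g) to coincide, i.e. g \<in> Z(\<chi>) iff \<rho>(g) is
  scalar. By Schur's lemma \<rho>(g) is scalar iff it commutes with \<rho>(G), i.e. iff every
  commutator [g,x] lies in ker \<rho>, i.e. iff [g,G] \<le> ker \<chi>. Since always Z(G) \<le> Z(\<chi>),
  \<chi> lies in X iff [g,G] \<le> ker \<chi> for some noncentral g.

  The formula for K(G) follows because every normal subgroup N is the intersection of
  the kernels of the irreducible characters of G/N: the permutation representation on
  the cosets of N has kernel exactly N, and an element acting nontrivially in some
  representation acts nontrivially on one of its irreducible constituents.
*)
theory Submission
  imports Defs "HOL-Algebra.Multiplicative_Group" "Jordan_Normal_Form.Jordan_Normal_Form_Existence"
    "Jordan_Normal_Form.Spectral_Radius"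
begin

section \<open>Traces and matrices of finite order\<close>

lemma mat_trace_mult_comm:
  fixes A B :: "complex mat"
  assumes A: "A \<in> carrier_mat n k" and B: "B \<in> carrier_mat k n"
  shows "mat_trace (A * B) = mat_trace (B * A)"
proof -
  have "mat_trace (A * B) = (\<Sum>i<n. \<Sum>j<k. A $$ (i, j) * B $$ (j, i))"
    unfolding mat_trace_def using A B
    by (auto simp: scalar_prod_def lessThan_atLeast0 intro!: sum.cong)
  also have "\<dots> = (\<Sum>j<k. \<Sum>i<n. B $$ (j, i) * A $$ (i, j))"
    by (subst sum.swap) (simp add: mult.commute)
  also have "\<dots> = mat_trace (B * A)"
    unfolding mat_trace_def using A B
    by (auto simp: scalar_prod_def lessThan_atLeast0 intro!: sum.cong)
  finally show ?thesis .
qed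

lemma mat_trace_conjugate:
  fixes A P Q :: "complex mat"
  assumes A: "A \<in> carrier_mat n n" and P: "P \<in> carrier_mat n n" and Q: "Q \<in> carrier_mat n n"
    and QP: "Q * P = 1\<^sub>m n"
  shows "mat_trace (P * A * Q) = mat_trace A"
proof -
  have "mat_trace (P * A * Q) = mat_trace (P * (A * Q))"
    using A P Q by (simp add: assoc_mult_mat)
  also have "\<dots> = mat_trace (A * Q * P)"
    using A P Q by (intro mat_trace_mult_comm) auto
  also have "\<dots> = mat_trace (A * (Q * P))"
    using A P Q by (simp add: assoc_mult_mat)
  finally show ?thesis
    using A QP by simp
qed

lemma mat_trace_one_mat [simp]: "mat_trace (1\<^sub>m n) = of_nat n"
  unfolding mat_trace_def by simp

lemma mat_trace_smult_one_mat [simp]: "mat_trace (c \<cdot>\<^sub>m 1\<^sub>m n) = of_nat n * c"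
  unfolding mat_trace_def by simp

lemma mat_trace_four_block_mat:
  assumes "A \<in> carrier_mat k k" and "D \<in> carrier_mat l l"
  shows "mat_trace (four_block_mat A B C D) = mat_trace A + mat_trace D"
proof -
  have split: "(\<Sum>i<k + l. f i) = (\<Sum>i<k. f i) + (\<Sum>i<l. f (k + i))" for f :: "nat \<Rightarrow> complex"
    by (induct l) auto
  show ?thesis
    using assms unfolding mat_trace_def by (simp add: split)
qed

lemma mat_trace_jordan_matrix:
  "mat_trace (jordan_matrix n_as) = (\<Sum>(k, a)\<leftarrow>n_as. of_nat k * (a :: complex))"
proof (induct n_as)
  case Nil
  then show ?case by (simp add: jordan_matrix_def mat_trace_def)
next
  case (Cons na n_as)
  obtain k a where "na = (k, a)" by force
  moreover have "mat_trace (jordan_block k a) = of_nat k * a"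
    unfolding mat_trace_def by simp
  ultimately show ?case
    using Cons
    by (simp add: jordan_matrix_Cons mat_trace_four_block_mat[OF jordan_block_carrier jordan_matrix_carrier])
qed

lemma jordan_matrix_replicate_one:
  "jordan_matrix (replicate n (1, c)) = (c :: complex) \<cdot>\<^sub>m 1\<^sub>m n"
proof (induct n)
  case 0
  then show ?case by (auto simp: jordan_matrix_def)
next
  case (Suc n)
  then show ?case
    by (simp add: jordan_matrix_Cons sum_list_replicate) (rule eq_matI; auto simp: jordan_block_def)
qed

lemma jordan_block_pow_eq_one_mat:
  fixes a :: complex
  assumes e: "jordan_block k a ^\<^sub>m m = 1\<^sub>m k" and m: "m > 0" and k: "k > 0"
  shows "k = 1 \<and> a ^ m = 1"
proof -
  have "(jordan_block k a ^\<^sub>m m) $$ (0, 0) = 1"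
    using e k by simp
  then have am: "a ^ m = 1"
    unfolding jordan_block_pow using k by simp
  then have a0: "a \<noteq> 0"
    using m by (metis power_0_left zero_neq_one neq0_conv)
  have "k = 1"
  proof (rule ccontr)
    assume "k \<noteq> 1"
    with k have k2: "1 < k" by auto
    have "(jordan_block k a ^\<^sub>m m) $$ (0, 1) = 0"
      using e k2 by simp
    then have "of_nat m * a ^ (m - 1) = 0"
      unfolding jordan_block_pow using k2 by simp
    then show False
      using a0 m by simp
  qed
  with am show ?thesis by simp
qed

lemma diag_block_mat_eq_one_mat:
  fixes Bs :: "complex mat list"
  assumes "diag_block_mat Bs = 1\<^sub>m n" and "\<And>B. B \<in> set Bs \<Longrightarrow> dim_row B = dim_col B"
  shows "\<forall>B \<in> set Bs. B = 1\<^sub>m (dim_row B)"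
  using assms
proof (induct Bs arbitrary: n)
  case Nil
  then show ?case by simp
next
  case (Cons B Bs)
  let ?D = "diag_block_mat Bs"
  have sq: "dim_row ?D = dim_col ?D"
    using Cons(3) by (simp add: dim_diag_block_mat) (metis (no_types, lifting) map_eq_conv)
  have sqB: "dim_row B = dim_col B"
    using Cons(3) by simp
  have eq: "four_block_mat B (0\<^sub>m (dim_row B) (dim_col ?D)) (0\<^sub>m (dim_row ?D) (dim_col B)) ?D = 1\<^sub>m n"
    using Cons(2) by (simp add: Let_def)
  then have n: "n = dim_row B + dim_row ?D"
    by (metis index_mat_four_block(2) index_one_mat(2))
  have "B = 1\<^sub>m (dim_row B)"
  proof (rule eq_matI)
    fix i j
    assume ij: "i < dim_row (1\<^sub>m (dim_row B))" "j < dim_col (1\<^sub>m (dim_row B))"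
    have "four_block_mat B (0\<^sub>m (dim_row B) (dim_col ?D)) (0\<^sub>m (dim_row ?D) (dim_col B)) ?D $$ (i, j)
        = 1\<^sub>m n $$ (i, j)"
      by (simp add: eq)
    then show "B $$ (i, j) = 1\<^sub>m (dim_row B) $$ (i, j)"
      using ij sqB n by simp
  qed (use sqB in auto)
  moreover have "?D = 1\<^sub>m (dim_row ?D)"
  proof (rule eq_matI)
    fix i j
    assume ij: "i < dim_row (1\<^sub>m (dim_row ?D))" "j < dim_col (1\<^sub>m (dim_row ?D))"
    have "four_block_mat B (0\<^sub>m (dim_row B) (dim_col ?D)) (0\<^sub>m (dim_row ?D) (dim_col B)) ?D
          $$ (i + dim_row B, j + dim_col B) = 1\<^sub>m n $$ (i + dim_row B, j + dim_col B)"
      by (simp add: eq)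
    then show "?D $$ (i, j) = 1\<^sub>m (dim_row ?D) $$ (i, j)"
      using ij sqB sq n by simp
  qed (use sq in auto)
  then have "\<forall>B\<in>set Bs. B = 1\<^sub>m (dim_row B)"
    using Cons(1)[of "dim_row ?D"] Cons(3) by auto
  ultimately show ?case by simp
qed

lemma norm_sum_eq_card_imp_equal:
  fixes a :: "nat \<Rightarrow> complex"
  assumes unit: "\<And>i. i < N \<Longrightarrow> cmod (a i) = 1" and s: "cmod (\<Sum>i<N. a i) = N"
    and i: "i < N" and j: "j < N"
  shows "a i = a j"
proof -
  \<comment> \<open>The numbers Re (conj s * a l) are at most N and sum up to |s|^2 = N^2, so all equal N.\<close>
  define s where "s = (\<Sum>i<N. a i)"
  have cs: "cmod (cnj s) = N"
    using s unfolding s_def complex_mod_cnj .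
  have le: "Re (cnj s * a l) \<le> N" if "l < N" for l
  proof -
    have "Re (cnj s * a l) \<le> cmod (cnj s * a l)" by (rule complex_Re_le_cmod)
    also have "\<dots> = N" using unit[OF that] cs by (simp add: norm_mult)
    finally show ?thesis .
  qed
  have "(\<Sum>l<N. Re (cnj s * a l)) = Re (\<Sum>l<N. cnj s * a l)"
    by (simp only: Re_sum)
  also have "\<dots> = Re (cnj s * s)"
    by (simp only: sum_distrib_left[symmetric] s_def)
  also have "\<dots> = (cmod s)\<^sup>2"
    by (metis complex_norm_square mult.commute Re_complex_of_real of_real_power)
  finally have sum_eq: "(\<Sum>l<N. (N - Re (cnj s * a l))) = 0"
    using s by (simp add: sum_subtractf s_def power2_eq_square)
  have eqN: "Re (cnj s * a l) = N" if "l < N" for l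
    using sum_nonneg_eq_0_iff[of "{..<N}" "\<lambda>l. N - Re (cnj s * a l)"] sum_eq le that by auto
  have eqz: "cnj s * a l = N" if "l < N" for l
  proof -
    let ?z = "cnj s * a l"
    have c: "cmod ?z = N"
      using unit[OF that] cs by (simp add: norm_mult)
    have "(Re ?z)\<^sup>2 + (Im ?z)\<^sup>2 = (cmod ?z)\<^sup>2"
      by (simp add: cmod_power2)
    then have "Im ?z = 0"
      using c eqN[OF that] by simp
    then show ?thesis
      using eqN[OF that] by (simp add: complex_eq_iff)
  qed
  have "s \<noteq> 0"
    using s i by (auto simp: s_def)
  then have "cnj s \<noteq> 0"
    by simp
  then show ?thesis
    using eqz[OF i] eqz[OF j] by (metis mult_left_cancel)
qed

lemma finite_order_mat_diagonalizable:
  fixes A :: "complex mat"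
  assumes A: "A \<in> carrier_mat n n" and m: "m > 0" and Am: "A ^\<^sub>m m = 1\<^sub>m n"
  obtains P Q bs where "similar_mat_wit A (jordan_matrix (map (\<lambda>b. (1, b)) bs)) P Q"
    and "length bs = n" and "\<And>b. b \<in> set bs \<Longrightarrow> cmod b = 1"
proof -
  obtain as where "char_poly A = (\<Prod>a\<leftarrow>as. [:- a, 1:])"
    using char_poly_factorized[OF A] by auto
  then obtain n_as where "jordan_nf A n_as"
    using jordan_nf_exists[OF A] by blast
  then obtain P Q where wit: "similar_mat_wit A (jordan_matrix n_as) P Q"
    and pos: "0 \<notin> fst ` set n_as"
    unfolding jordan_nf_def similar_mat_def by auto
  note W = similar_mat_witD2[OF A wit]
  have "diag_block_mat (map (\<lambda>(k, a). jordan_block k a ^\<^sub>m m) n_as) = jordan_matrix n_as ^\<^sub>m m"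
    by (simp add: jordan_matrix_pow)
  also have "\<dots> = Q * A ^\<^sub>m m * P"
    by (rule similar_mat_wit_pow_id[OF similar_mat_wit_sym[OF wit]])
  also have "\<dots> = 1\<^sub>m n"
    using Am W by simp
  finally have Jm: "diag_block_mat (map (\<lambda>(k, a). jordan_block k a ^\<^sub>m m) n_as) = 1\<^sub>m n" .
  have blocks: "k = 1 \<and> a ^ m = 1" if ka: "(k, a) \<in> set n_as" for k a
  proof -
    have "jordan_block k a ^\<^sub>m m = 1\<^sub>m k"
      using diag_block_mat_eq_one_mat[OF Jm] ka by fastforce
    moreover have "k > 0"
      using pos ka by (metis fst_conv image_eqI neq0_conv)
    ultimately show ?thesis
      using jordan_block_pow_eq_one_mat m by blast
  qed
  define bs where "bs = map snd n_as"
  have "map (\<lambda>p. (1::nat, snd p)) n_as = n_as"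
    by (rule map_idI) (use blocks in force)
  then have n_as: "n_as = map (\<lambda>b. (1, b)) bs"
    unfolding bs_def map_map by (simp add: comp_def)
  have "sum_list (map fst n_as) = length bs"
    unfolding n_as by (induct bs) auto
  then have "length bs = n"
    using W by auto
  moreover have "cmod b = 1" if "b \<in> set bs" for b
  proof -
    have "cmod b ^ m = 1"
      using blocks[of 1 b] that unfolding n_as by (auto simp: norm_power[symmetric])
    then show ?thesis
      using m by (intro power_eq_imp_eq_base[of _ m 1]) auto
  qed
  ultimately show thesis
    using that wit n_as by blast
qed

lemma finite_order_mat_scalar:
  fixes A :: "complex mat"
  assumes A: "A \<in> carrier_mat n n" and m: "m > 0" and Am: "A ^\<^sub>m m = 1\<^sub>m n"
    and tr: "cmod (mat_trace A) = n"
  shows "\<exists>c. A = c \<cdot>\<^sub>m 1\<^sub>m n"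
proof -
  \<comment> \<open>The eigenvalues are unit complex numbers whose sum has modulus n, so they coincide.\<close>
  obtain P Q bs where wit: "similar_mat_wit A (jordan_matrix (map (\<lambda>b. (1, b)) bs)) P Q"
    and len: "length bs = n" and unit: "\<And>b. b \<in> set bs \<Longrightarrow> cmod b = 1"
    by (rule finite_order_mat_diagonalizable[OF A m Am]) blast
  note W = similar_mat_witD2[OF A wit]
  have "mat_trace A = mat_trace (P * jordan_matrix (map (\<lambda>b. (1, b)) bs) * Q)"
    using W by simp
  also have "\<dots> = mat_trace (jordan_matrix (map (\<lambda>b. (1, b)) bs))"
    by (rule mat_trace_conjugate) (use W in auto)
  also have "\<dots> = (\<Sum>i<n. bs ! i)"
    using len by (simp add: mat_trace_jordan_matrix comp_def sum_list_sum_nth lessThan_atLeast0)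
  finally have sum: "cmod (\<Sum>i<n. bs ! i) = n"
    using tr by simp
  have unit_nth: "cmod (bs ! i) = 1" if "i < n" for i
    using unit[OF nth_mem] len that by simp
  have all_eq: "bs ! i = bs ! j" if "i < n" "j < n" for i j
    using norm_sum_eq_card_imp_equal[OF unit_nth sum that] .
  show ?thesis
  proof (cases "n = 0")
    case True
    then show ?thesis
      using A by (intro exI[of _ 1] eq_matI) auto
  next
    case False
    define c where "c = bs ! 0"
    have "bs = replicate n c"
    proof (rule nth_equalityI)
      fix i
      assume "i < length bs"
      then show "bs ! i = replicate n c ! i"
        using all_eq[of i 0] len False by (simp add: c_def)
    qed (use len in simp)
    then have J: "jordan_matrix (map (\<lambda>b. (1, b)) bs) = c \<cdot>\<^sub>m 1\<^sub>m n"
      using jordan_matrix_replicate_one[of n c] by simp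
    have "A = P * (c \<cdot>\<^sub>m 1\<^sub>m n) * Q"
      using W J by simp
    also have "\<dots> = c \<cdot>\<^sub>m (P * Q)"
      using W by (simp add: mult_smult_distrib[of P n n "1\<^sub>m n" n] mult_smult_assoc_mat[of P n n Q n])
    also have "\<dots> = c \<cdot>\<^sub>m 1\<^sub>m n"
      using W by simp
    finally show ?thesis by blast
  qed
qed

section \<open>Irreducible characters and their centres\<close>

context group
begin

lemma is_rep_carrier: "is_rep G n \<rho> \<Longrightarrow> x \<in> carrier G \<Longrightarrow> \<rho> x \<in> carrier_mat n n"
  unfolding is_rep_def by auto

lemma is_rep_one: "is_rep G n \<rho> \<Longrightarrow> \<rho> \<one> = 1\<^sub>m n"
  unfolding is_rep_def by auto

lemma is_rep_mult:
  "is_rep G n \<rho> \<Longrightarrow> x \<in> carrier G \<Longrightarrow> y \<in> carrier G \<Longrightarrow> \<rho> (x \<otimes> y) = \<rho> x * \<rho> y"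
  unfolding is_rep_def by auto

lemma is_rep_pow:
  assumes r: "is_rep G n \<rho>" and x: "x \<in> carrier G"
  shows "\<rho> (x [^] (k::nat)) = \<rho> x ^\<^sub>m k"
proof (induct k)
  case 0
  then show ?case using is_rep_one[OF r] is_rep_carrier[OF r x] by simp
next
  case (Suc k)
  then show ?case using is_rep_mult[OF r] x by simp
qed

lemma is_rep_pow_order:
  assumes "is_rep G n \<rho>" and "x \<in> carrier G"
  shows "\<rho> x ^\<^sub>m Coset.order G = 1\<^sub>m n"
  using is_rep_pow[OF assms, symmetric] pow_order_eq_1[OF assms(2)] is_rep_one[OF assms(1)] by simp

lemma character_one: "is_rep G n \<rho> \<Longrightarrow> character G \<rho> \<one> = of_nat n"
  unfolding character_def by (simp add: is_rep_one)

lemma commuting_eigenspace_invariant: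
  assumes r: "is_rep G n \<rho>" and B: "B \<in> carrier_mat n n"
    and comm: "\<And>x. x \<in> carrier G \<Longrightarrow> B * \<rho> x = \<rho> x * B"
  shows "invariant_subspace G n \<rho> {w \<in> carrier_vec n. B *\<^sub>v w = c \<cdot>\<^sub>v w}"
    (is "invariant_subspace G n \<rho> ?E")
  unfolding invariant_subspace_def
proof (intro conjI ballI allI)
  show "?E \<subseteq> carrier_vec n" "0\<^sub>v n \<in> ?E"
    using B by auto
next
  fix v w
  assume "v \<in> ?E" "w \<in> ?E"
  then show "v + w \<in> ?E"
    using B by (auto simp: mult_add_distrib_mat_vec[OF B] smult_add_distrib_vec[of _ n])
next
  fix a w
  assume "w \<in> ?E"
  then show "a \<cdot>\<^sub>v w \<in> ?E"
    using B by (auto simp: mult_mat_vec[OF B] smult_smult_assoc mult.commute)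
next
  fix x w
  assume x: "x \<in> carrier G" and "w \<in> ?E"
  then have w: "w \<in> carrier_vec n" "B *\<^sub>v w = c \<cdot>\<^sub>v w"
    by auto
  have rx: "\<rho> x \<in> carrier_mat n n"
    using is_rep_carrier[OF r x] .
  have "B *\<^sub>v (\<rho> x *\<^sub>v w) = (B * \<rho> x) *\<^sub>v w"
    using w rx B by simp
  also have "\<dots> = \<rho> x *\<^sub>v (c \<cdot>\<^sub>v w)"
    using comm[OF x] w rx B by simp
  also have "\<dots> = c \<cdot>\<^sub>v (\<rho> x *\<^sub>v w)"
    using w rx by (simp add: mult_mat_vec)
  finally show "\<rho> x *\<^sub>v w \<in> ?E"
    using w rx by simp
qed

lemma schur_lemma:
  assumes irr: "irreducible_rep G n \<rho>" and B: "B \<in> carrier_mat n n"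
    and comm: "\<And>x. x \<in> carrier G \<Longrightarrow> B * \<rho> x = \<rho> x * B"
  shows "\<exists>c. B = c \<cdot>\<^sub>m 1\<^sub>m n"
proof -
  from irr have r: "is_rep G n \<rho>" and n: "n > 0"
    and irreducible: "\<And>W. invariant_subspace G n \<rho> W \<Longrightarrow> W = {0\<^sub>v n} \<or> W = carrier_vec n"
    unfolding irreducible_rep_def by auto
  obtain c where "eigenvalue B c"
    using spectrum_non_empty[OF B n] unfolding spectrum_def by auto
  then obtain v where v: "v \<in> carrier_vec n" "v \<noteq> 0\<^sub>v n" "B *\<^sub>v v = c \<cdot>\<^sub>v v"
    unfolding eigenvalue_def eigenvector_def using B by auto
  have "{w \<in> carrier_vec n. B *\<^sub>v w = c \<cdot>\<^sub>v w} = carrier_vec n"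
    using irreducible[OF commuting_eigenspace_invariant[OF r B comm]] v by auto
  then have eigen: "B *\<^sub>v unit_vec n j = c \<cdot>\<^sub>v unit_vec n j" for j
    using unit_vec_carrier[of n j] by blast
  have "B = c \<cdot>\<^sub>m 1\<^sub>m n"
  proof (rule eq_matI)
    fix i j
    assume "i < dim_row (c \<cdot>\<^sub>m 1\<^sub>m n)" "j < dim_col (c \<cdot>\<^sub>m 1\<^sub>m n)"
    then have ij: "i < n" "j < n" by auto
    have "B $$ (i, j) = (B *\<^sub>v unit_vec n j) $ i"
      using B ij by (simp add: scalar_prod_right_unit)
    also have "\<dots> = (c \<cdot>\<^sub>m 1\<^sub>m n) $$ (i, j)"
      using eigen[of j] ij by simp
    finally show "B $$ (i, j) = (c \<cdot>\<^sub>m 1\<^sub>m n) $$ (i, j)" .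
  qed (use B in auto)
  then show ?thesis by blast
qed

lemma is_rep_scalar_norm_eq_one:
  assumes r: "is_rep G n \<rho>" and x: "x \<in> carrier G" and fin: "finite (carrier G)"
    and n: "n > 0" and e: "\<rho> x = c \<cdot>\<^sub>m 1\<^sub>m n"
  shows "cmod c = 1"
proof -
  have "(c \<cdot>\<^sub>m 1\<^sub>m n) ^\<^sub>m k = c ^ k \<cdot>\<^sub>m 1\<^sub>m n" for k
    by (induct k) (auto intro!: eq_matI)
  then have "c ^ Coset.order G \<cdot>\<^sub>m 1\<^sub>m n = 1\<^sub>m n"
    using is_rep_pow_order[OF r x] e by simp
  then have "(c ^ Coset.order G \<cdot>\<^sub>m 1\<^sub>m n) $$ (0, 0) = 1\<^sub>m n $$ (0, 0)"
    by simp
  then have "cmod c ^ Coset.order G = 1"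
    using n by (simp add: norm_power[symmetric])
  then show ?thesis
    using order_gt_0_iff_finite[THEN iffD2, OF fin]
    by (intro power_eq_imp_eq_base[of _ "Coset.order G" 1]) auto
qed

lemma char_center_iff_scalar:
  assumes r: "is_rep G n \<rho>" and x: "x \<in> carrier G" and fin: "finite (carrier G)" and n: "n > 0"
  shows "x \<in> char_center G (character G \<rho>) \<longleftrightarrow> (\<exists>c. \<rho> x = c \<cdot>\<^sub>m 1\<^sub>m n)"
proof -
  have "x \<in> char_center G (character G \<rho>) \<longleftrightarrow> cmod (mat_trace (\<rho> x)) = n"
    unfolding char_center_def character_def using character_one[OF r] x
    by (simp add: character_def) (metis of_real_eq_iff of_real_of_nat_eq)
  also have "\<dots> \<longleftrightarrow> (\<exists>c. \<rho> x = c \<cdot>\<^sub>m 1\<^sub>m n)"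
  proof
    assume "cmod (mat_trace (\<rho> x)) = n"
    then show "\<exists>c. \<rho> x = c \<cdot>\<^sub>m 1\<^sub>m n"
      using finite_order_mat_scalar[OF is_rep_carrier[OF r x] _ is_rep_pow_order[OF r x]]
        order_gt_0_iff_finite[THEN iffD2, OF fin]
      by blast
  next
    assume "\<exists>c. \<rho> x = c \<cdot>\<^sub>m 1\<^sub>m n"
    then obtain c where c: "\<rho> x = c \<cdot>\<^sub>m 1\<^sub>m n" ..
    then show "cmod (mat_trace (\<rho> x)) = n"
      using is_rep_scalar_norm_eq_one[OF r x fin n c] by (simp add: norm_mult)
  qed
  finally show ?thesis .
qed

lemma is_rep_eq_one_mat_iff:
  assumes r: "is_rep G n \<rho>" and x: "x \<in> carrier G" and fin: "finite (carrier G)"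
  shows "\<rho> x = 1\<^sub>m n \<longleftrightarrow> mat_trace (\<rho> x) = of_nat n"
proof
  assume tr: "mat_trace (\<rho> x) = of_nat n"
  then obtain c where c: "\<rho> x = c \<cdot>\<^sub>m 1\<^sub>m n"
    using finite_order_mat_scalar[OF is_rep_carrier[OF r x] _ is_rep_pow_order[OF r x]]
      order_gt_0_iff_finite[THEN iffD2, OF fin]
    by auto
  show "\<rho> x = 1\<^sub>m n"
  proof (cases "n = 0")
    case True
    then show ?thesis
      using is_rep_carrier[OF r x] by (intro eq_matI) auto
  next
    case False
    then have "c = 1"
      using tr c by simp
    then show ?thesis
      using c by (intro eq_matI) auto
  qed
qed simp

lemma char_ker_character:
  assumes "is_rep G n \<rho>" and "finite (carrier G)"
  shows "char_ker G (character G \<rho>) = {x \<in> carrier G. \<rho> x = 1\<^sub>m n}"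
  using is_rep_eq_one_mat_iff[OF assms(1) _ assms(2)] character_one[OF assms(1)]
  unfolding char_ker_def character_def by auto

lemma char_ker_subgroup:
  assumes r: "is_rep G n \<rho>" and fin: "finite (carrier G)"
  shows "subgroup (char_ker G (character G \<rho>)) G"
  unfolding char_ker_character[OF r fin]
proof (rule subgroupI)
  fix a
  assume "a \<in> {x \<in> carrier G. \<rho> x = 1\<^sub>m n}"
  then have a: "a \<in> carrier G" "\<rho> a = 1\<^sub>m n" by auto
  have "\<rho> (inv a) = \<rho> (inv a) * \<rho> a"
    using a is_rep_carrier[OF r, of "inv a"] by simp
  also have "\<dots> = 1\<^sub>m n"
    using is_rep_mult[OF r, of "inv a" a] is_rep_one[OF r] a by simp
  finally show "inv a \<in> {x \<in> carrier G. \<rho> x = 1\<^sub>m n}"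
    using a by simp
qed (use is_rep_one[OF r] is_rep_mult[OF r] in auto)

lemma inv_mult_cancel_left [simp]: "x \<in> carrier G \<Longrightarrow> y \<in> carrier G \<Longrightarrow> inv x \<otimes> (x \<otimes> y) = y"
  by (simp add: m_assoc[symmetric])

lemma mult_inv_cancel_left [simp]: "x \<in> carrier G \<Longrightarrow> y \<in> carrier G \<Longrightarrow> x \<otimes> (inv x \<otimes> y) = y"
  by (simp add: m_assoc[symmetric])

lemma grp_comm_closed [simp]:
  "g \<in> carrier G \<Longrightarrow> x \<in> carrier G \<Longrightarrow> grp_comm G g x \<in> carrier G"
  unfolding grp_comm_def by simp

lemma grp_comm_eq: "g \<in> carrier G \<Longrightarrow> x \<in> carrier G \<Longrightarrow> grp_comm G g x = inv (x \<otimes> g) \<otimes> (g \<otimes> x)"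
  unfolding grp_comm_def by (simp add: inv_mult_group m_assoc)

lemma is_rep_grp_comm_eq_one_mat_iff:
  assumes r: "is_rep G n \<rho>" and g: "g \<in> carrier G" and x: "x \<in> carrier G"
  shows "\<rho> (grp_comm G g x) = 1\<^sub>m n \<longleftrightarrow> \<rho> (g \<otimes> x) = \<rho> (x \<otimes> g)"
proof -
  have xg: "x \<otimes> g \<in> carrier G"
    using x g by simp
  have comm: "\<rho> (grp_comm G g x) = \<rho> (inv (x \<otimes> g)) * \<rho> (g \<otimes> x)"
    using grp_comm_eq[OF g x] is_rep_mult[OF r] g x by simp
  have "g \<otimes> x = x \<otimes> g \<otimes> grp_comm G g x"
    using g x by (simp add: grp_comm_def m_assoc)
  then have gx: "\<rho> (g \<otimes> x) = \<rho> (x \<otimes> g) * \<rho> (grp_comm G g x)"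
    using is_rep_mult[OF r] g x by simp
  have inv_xg: "\<rho> (inv (x \<otimes> g)) * \<rho> (x \<otimes> g) = 1\<^sub>m n"
    using is_rep_mult[OF r, of "inv (x \<otimes> g)" "x \<otimes> g"] is_rep_one[OF r] xg by simp
  show ?thesis
  proof
    assume "\<rho> (grp_comm G g x) = 1\<^sub>m n"
    then show "\<rho> (g \<otimes> x) = \<rho> (x \<otimes> g)"
      using gx is_rep_carrier[OF r xg] by simp
  next
    assume "\<rho> (g \<otimes> x) = \<rho> (x \<otimes> g)"
    then have "\<rho> (grp_comm G g x) = \<rho> (inv (x \<otimes> g)) * \<rho> (x \<otimes> g)"
      using comm by simp
    then show "\<rho> (grp_comm G g x) = 1\<^sub>m n"
      using inv_xg by simp
  qed
qed

lemma irreducible_rep_scalar_iff_commute: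
  assumes irr: "irreducible_rep G n \<rho>" and g: "g \<in> carrier G"
  shows "(\<exists>c. \<rho> g = c \<cdot>\<^sub>m 1\<^sub>m n) \<longleftrightarrow> (\<forall>x\<in>carrier G. \<rho> (g \<otimes> x) = \<rho> (x \<otimes> g))"
proof
  have r: "is_rep G n \<rho>"
    using irr unfolding irreducible_rep_def by auto
  assume "\<exists>c. \<rho> g = c \<cdot>\<^sub>m 1\<^sub>m n"
  then obtain c where c: "\<rho> g = c \<cdot>\<^sub>m 1\<^sub>m n" ..
  show "\<forall>x\<in>carrier G. \<rho> (g \<otimes> x) = \<rho> (x \<otimes> g)"
  proof
    fix x
    assume x: "x \<in> carrier G"
    have rx: "\<rho> x \<in> carrier_mat n n"
      using is_rep_carrier[OF r x] .
    have "\<rho> (g \<otimes> x) = c \<cdot>\<^sub>m \<rho> x"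
      using is_rep_mult[OF r g x] c rx by (simp add: mult_smult_assoc_mat[of _ n n _ n])
    also have "\<dots> = \<rho> (x \<otimes> g)"
      using is_rep_mult[OF r x g] c rx by (simp add: mult_smult_distrib[OF rx one_carrier_mat])
    finally show "\<rho> (g \<otimes> x) = \<rho> (x \<otimes> g)" .
  qed
next
  have r: "is_rep G n \<rho>"
    using irr unfolding irreducible_rep_def by auto
  assume "\<forall>x\<in>carrier G. \<rho> (g \<otimes> x) = \<rho> (x \<otimes> g)"
  then show "\<exists>c. \<rho> g = c \<cdot>\<^sub>m 1\<^sub>m n"
    using g by (intro schur_lemma[OF irr is_rep_carrier[OF r g]]) (simp add: is_rep_mult[OF r, symmetric])
qed

lemma grp_center_subset_char_center:
  assumes irr: "irreducible_rep G n \<rho>" and fin: "finite (carrier G)"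
  shows "grp_center G \<subseteq> char_center G (character G \<rho>)"
proof
  fix z
  assume "z \<in> grp_center G"
  then have z: "z \<in> carrier G" and central: "\<forall>x\<in>carrier G. z \<otimes> x = x \<otimes> z"
    unfolding grp_center_def by auto
  have r: "is_rep G n \<rho>" and n: "n > 0"
    using irr unfolding irreducible_rep_def by auto
  show "z \<in> char_center G (character G \<rho>)"
    using irreducible_rep_scalar_iff_commute[OF irr z] central char_center_iff_scalar[OF r z fin n]
    by simp
qed

lemma comm_sub_subset_iff:
  assumes H: "subgroup H G" and g: "g \<in> carrier G"
  shows "comm_sub G g \<subseteq> H \<longleftrightarrow> (\<forall>x\<in>carrier G. grp_comm G g x \<in> H)"
proof
  assume sub: "comm_sub G g \<subseteq> H"
  have "grp_comm G g x \<in> comm_sub G g" if "x \<in> carrier G" for x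
    unfolding comm_sub_def using that by (intro generate.incl) auto
  then show "\<forall>x\<in>carrier G. grp_comm G g x \<in> H"
    using sub by auto
next
  assume "\<forall>x\<in>carrier G. grp_comm G g x \<in> H"
  then show "comm_sub G g \<subseteq> H"
    unfolding comm_sub_def by (intro generate_subgroup_incl[OF _ H]) auto
qed

lemma char_center_iff_comm_sub_subset_char_ker:
  assumes irr: "irreducible_rep G n \<rho>" and fin: "finite (carrier G)" and g: "g \<in> carrier G"
  shows "g \<in> char_center G (character G \<rho>) \<longleftrightarrow> comm_sub G g \<subseteq> char_ker G (character G \<rho>)"
proof -
  have r: "is_rep G n \<rho>" and n: "n > 0"
    using irr unfolding irreducible_rep_def by auto
  have "g \<in> char_center G (character G \<rho>) \<longleftrightarrow> (\<exists>c. \<rho> g = c \<cdot>\<^sub>m 1\<^sub>m n)"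
    by (rule char_center_iff_scalar[OF r g fin n])
  also have "\<dots> \<longleftrightarrow> (\<forall>x\<in>carrier G. \<rho> (g \<otimes> x) = \<rho> (x \<otimes> g))"
    by (rule irreducible_rep_scalar_iff_commute[OF irr g])
  also have "\<dots> \<longleftrightarrow> (\<forall>x\<in>carrier G. grp_comm G g x \<in> char_ker G (character G \<rho>))"
    using is_rep_grp_comm_eq_one_mat_iff[OF r g] g by (simp add: char_ker_character[OF r fin])
  also have "\<dots> \<longleftrightarrow> comm_sub G g \<subseteq> char_ker G (character G \<rho>)"
    by (rule comm_sub_subset_iff[OF char_ker_subgroup[OF r fin] g, symmetric])
  finally show ?thesis .
qed

lemma Xset_eq_Union_Irr_quot:
  assumes fin: "finite (carrier G)"
  shows "Xset G = (\<Union>g \<in> carrier G - grp_center G. Irr_quot G (comm_sub G g))"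
proof -
  have "\<chi> \<in> Xset G \<longleftrightarrow>
      \<chi> \<in> Irr G \<and> (\<exists>g \<in> carrier G - grp_center G. comm_sub G g \<subseteq> char_ker G \<chi>)" for \<chi>
  proof (cases "\<chi> \<in> Irr G")
    case True
    then obtain n \<rho> where irr: "irreducible_rep G n \<rho>" and \<chi>: "\<chi> = character G \<rho>"
      unfolding Irr_def by auto
    have "char_center G \<chi> \<subseteq> carrier G"
      unfolding char_center_def by auto
    then have "grp_center G \<subset> char_center G \<chi> \<longleftrightarrow>
        (\<exists>g \<in> carrier G - grp_center G. g \<in> char_center G \<chi>)"
      using grp_center_subset_char_center[OF irr fin] \<chi> by auto
    then show ?thesis
      using True \<chi> char_center_iff_comm_sub_subset_char_ker[OF irr fin] unfolding Xset_def by auto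
  qed (simp add: Xset_def)
  then show ?thesis
    unfolding Irr_quot_def by auto
qed

end

section \<open>Bases adapted to a subspace\<close>

definition vec_subspace :: "nat \<Rightarrow> complex vec set \<Rightarrow> bool" where
  "vec_subspace d W \<longleftrightarrow> W \<subseteq> carrier_vec d \<and> 0\<^sub>v d \<in> W \<and>
     (\<forall>v\<in>W. \<forall>w\<in>W. v + w \<in> W) \<and> (\<forall>a. \<forall>v\<in>W. a \<cdot>\<^sub>v v \<in> W)"

definition cols_span :: "nat \<Rightarrow> complex vec list \<Rightarrow> complex vec set" where
  "cols_span d ws = {mat_of_cols d ws *\<^sub>v c | c. c \<in> carrier_vec (length ws)}"

definition indep_cols :: "nat \<Rightarrow> complex vec list \<Rightarrow> bool" where
  "indep_cols d ws \<longleftrightarrow> set ws \<subseteq> carrier_vec d \<and>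
     (\<forall>c\<in>carrier_vec (length ws). mat_of_cols d ws *\<^sub>v c = 0\<^sub>v d \<longrightarrow> c = 0\<^sub>v (length ws))"

lemma mat_of_cols_mult_vec_index:
  assumes "i < d" and "c \<in> carrier_vec (length ws)"
  shows "(mat_of_cols d ws *\<^sub>v c) $ i = (\<Sum>j<length ws. (ws ! j) $ i * c $ j)"
  using assms by (simp add: scalar_prod_def mat_of_cols_def lessThan_atLeast0)

lemma mat_of_cols_mult_vec_carrier [simp]: "mat_of_cols d ws *\<^sub>v c \<in> carrier_vec d"
  by (metis carrier_vec_dim_vec dim_mult_mat_vec mat_of_cols_carrier(2))

lemma mat_of_cols_snoc_mult_vec:
  fixes w :: "complex vec"
  assumes w: "w \<in> carrier_vec d" and c: "c \<in> carrier_vec (Suc (length ws))"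
  shows "mat_of_cols d (ws @ [w]) *\<^sub>v c =
    mat_of_cols d ws *\<^sub>v vec (length ws) (\<lambda>i. c $ i) + c $ (length ws) \<cdot>\<^sub>v w"
proof (rule eq_vecI)
  fix i
  assume "i < dim_vec (mat_of_cols d ws *\<^sub>v vec (length ws) (\<lambda>i. c $ i) + c $ (length ws) \<cdot>\<^sub>v w)"
  then have i: "i < d"
    using w by simp
  have "(mat_of_cols d (ws @ [w]) *\<^sub>v c) $ i = (\<Sum>j<Suc (length ws). ((ws @ [w]) ! j) $ i * c $ j)"
    using mat_of_cols_mult_vec_index[OF i, of c "ws @ [w]"] c by simp
  also have "\<dots> = (\<Sum>j<length ws. (ws ! j) $ i * c $ j) + w $ i * c $ length ws"
    by (simp add: nth_append)
  also have "\<dots> = (mat_of_cols d ws *\<^sub>v vec (length ws) (\<lambda>i. c $ i)) $ i + (c $ (length ws) \<cdot>\<^sub>v w) $ i"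
    using mat_of_cols_mult_vec_index[OF i, of "vec (length ws) (\<lambda>i. c $ i)" ws] w i
    by (simp add: mult.commute[of "w $ i"])
  also have "\<dots> = (mat_of_cols d ws *\<^sub>v vec (length ws) (\<lambda>i. c $ i) + c $ (length ws) \<cdot>\<^sub>v w) $ i"
    using w i by simp
  finally show "(mat_of_cols d (ws @ [w]) *\<^sub>v c) $ i = \<dots>" .
qed (use w in simp)

lemma mat_of_cols_append_mult_vec_zero:
  fixes c :: "complex vec"
  assumes c: "c \<in> carrier_vec (length ws)"
  shows "mat_of_cols d (ws @ us) *\<^sub>v (c @\<^sub>v 0\<^sub>v (length us)) = mat_of_cols d ws *\<^sub>v c"
proof (rule eq_vecI)
  fix i
  assume "i < dim_vec (mat_of_cols d ws *\<^sub>v c)"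
  then have i: "i < d" by simp
  let ?f = "\<lambda>j. ((ws @ us) ! j) $ i * (c @\<^sub>v 0\<^sub>v (length us)) $ j"
  have "(mat_of_cols d (ws @ us) *\<^sub>v (c @\<^sub>v 0\<^sub>v (length us))) $ i = (\<Sum>j<length ws + length us. ?f j)"
    using mat_of_cols_mult_vec_index[OF i, of _ "ws @ us"] c by simp
  also have "\<dots> = (\<Sum>j\<in>{0..<length ws}. ?f j) + (\<Sum>j\<in>{length ws..<length ws + length us}. ?f j)"
    by (simp add: lessThan_atLeast0 sum.atLeastLessThan_concat)
  also have "(\<Sum>j\<in>{length ws..<length ws + length us}. ?f j) = 0"
    using c by (intro sum.neutral) auto
  also have "(\<Sum>j\<in>{0..<length ws}. ?f j) = (\<Sum>j<length ws. (ws ! j) $ i * c $ j)"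
    using c by (auto simp: lessThan_atLeast0 nth_append intro!: sum.cong)
  also have "\<dots> = (mat_of_cols d ws *\<^sub>v c) $ i"
    using mat_of_cols_mult_vec_index[OF i c] by simp
  finally show "(mat_of_cols d (ws @ us) *\<^sub>v (c @\<^sub>v 0\<^sub>v (length us))) $ i = (mat_of_cols d ws *\<^sub>v c) $ i"
    by simp
qed simp

lemma cols_span_subset_subspace:
  assumes W: "vec_subspace d W" and ws: "set ws \<subseteq> W"
  shows "cols_span d ws \<subseteq> W"
proof -
  have "mat_of_cols d ws *\<^sub>v c \<in> W" if "c \<in> carrier_vec (length ws)" for c
    using ws that
  proof (induct ws arbitrary: c rule: rev_induct)
    case Nil
    then have "mat_of_cols d [] *\<^sub>v c = 0\<^sub>v d"
      by (intro eq_vecI) (auto simp: mat_of_cols_def scalar_prod_def)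
    then show ?case
      using W unfolding vec_subspace_def by simp
  next
    case (snoc w ws)
    have w: "w \<in> carrier_vec d" and cw: "c $ length ws \<cdot>\<^sub>v w \<in> W"
      using snoc.prems W unfolding vec_subspace_def by auto
    have "mat_of_cols d ws *\<^sub>v vec (length ws) (\<lambda>i. c $ i) \<in> W"
      using snoc by auto
    then show ?case
      using mat_of_cols_snoc_mult_vec[OF w, of c ws] snoc.prems cw W unfolding vec_subspace_def by auto
  qed
  then show ?thesis
    unfolding cols_span_def by auto
qed

lemma indep_cols_length_le:
  assumes ind: "indep_cols d ws"
  shows "length ws \<le> d"
proof (rule ccontr)
  \<comment> \<open>Pad the columns with zero rows to a singular square matrix and take a kernel vector.\<close>
  assume "\<not> length ws \<le> d"
  then have L: "d < length ws" by simp
  define L where "L = length ws"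
  define A where "A = mat L L (\<lambda>(i, j). if i < d then (ws ! j) $ i else 0)"
  have A: "A \<in> carrier_mat L L"
    unfolding A_def by simp
  have At: "transpose_mat A \<in> carrier_mat L L"
    using A by simp
  have "transpose_mat A *\<^sub>v unit_vec L (L - 1) = 0\<^sub>v L"
    using L unfolding A_def L_def by (intro eq_vecI) (auto simp: scalar_prod_right_unit)
  moreover have "unit_vec L (L - 1) \<noteq> 0\<^sub>v L"
    using L unfolding L_def by simp
  ultimately have "det (transpose_mat A) = 0"
    using det_0_iff_vec_prod_zero_field[OF At] by (metis unit_vec_carrier)
  then have "det A = 0"
    using det_transpose[OF A] by simp
  then obtain v where v: "v \<in> carrier_vec L" "v \<noteq> 0\<^sub>v L" "A *\<^sub>v v = 0\<^sub>v L"
    using det_0_iff_vec_prod_zero_field[OF A] by auto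
  have "mat_of_cols d ws *\<^sub>v v = 0\<^sub>v d"
  proof (rule eq_vecI)
    fix i
    assume "i < dim_vec (0\<^sub>v d :: complex vec)"
    then have i: "i < d" by simp
    have "(A *\<^sub>v v) $ i = (\<Sum>j<L. (ws ! j) $ i * v $ j)"
      using i L v(1) unfolding A_def L_def by (simp add: scalar_prod_def lessThan_atLeast0)
    then show "(mat_of_cols d ws *\<^sub>v v) $ i = 0\<^sub>v d $ i"
      using v(3) i L mat_of_cols_mult_vec_index[OF i, of v ws] v(1) unfolding L_def by simp
  qed simp
  with ind v show False
    unfolding indep_cols_def L_def by auto
qed

lemma indep_cols_snoc:
  assumes ind: "indep_cols d ws" and w: "w \<in> carrier_vec d" and new: "w \<notin> cols_span d ws"
  shows "indep_cols d (ws @ [w])"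
  unfolding indep_cols_def
proof (intro conjI ballI impI)
  show "set (ws @ [w]) \<subseteq> carrier_vec d"
    using ind w unfolding indep_cols_def by auto
  fix c
  assume c: "c \<in> carrier_vec (length (ws @ [w]))" and z: "mat_of_cols d (ws @ [w]) *\<^sub>v c = 0\<^sub>v d"
  let ?L = "length ws"
  let ?c = "vec ?L (\<lambda>i. c $ i)"
  have e: "mat_of_cols d ws *\<^sub>v ?c + c $ ?L \<cdot>\<^sub>v w = 0\<^sub>v d"
    using mat_of_cols_snoc_mult_vec[OF w, of c] c z by simp
  have cL: "c $ ?L = 0"
  proof (rule ccontr)
    assume nz: "c $ ?L \<noteq> 0"
    have "mat_of_cols d ws *\<^sub>v ?c = - (c $ ?L \<cdot>\<^sub>v w)"
    proof (rule eq_vecI)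
      fix i
      assume "i < dim_vec (- (c $ ?L \<cdot>\<^sub>v w))"
      then have i: "i < d"
        using w by simp
      have "(mat_of_cols d ws *\<^sub>v ?c + c $ ?L \<cdot>\<^sub>v w) $ i = 0"
        using e i by simp
      then show "(mat_of_cols d ws *\<^sub>v ?c) $ i = (- (c $ ?L \<cdot>\<^sub>v w)) $ i"
        using i w by (simp add: eq_neg_iff_add_eq_0)
    qed (use w in simp)
    then have "mat_of_cols d ws *\<^sub>v ((- 1 / c $ ?L) \<cdot>\<^sub>v ?c) = (- 1 / c $ ?L) \<cdot>\<^sub>v (- (c $ ?L \<cdot>\<^sub>v w))"
      by (subst mult_mat_vec) auto
    also have "\<dots> = w"
      using nz w by (auto intro!: eq_vecI)
    finally have "mat_of_cols d ws *\<^sub>v ((- 1 / c $ ?L) \<cdot>\<^sub>v ?c) = w" .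
    then have "w \<in> cols_span d ws"
      unfolding cols_span_def by force
    then show False
      using new by simp
  qed
  moreover have "0 \<cdot>\<^sub>v w = 0\<^sub>v d"
    using w by (intro eq_vecI) auto
  ultimately have "mat_of_cols d ws *\<^sub>v ?c = 0\<^sub>v d"
    using e w by (simp add: right_zero_vec[OF mat_of_cols_mult_vec_carrier])
  then have "?c = 0\<^sub>v ?L"
    using ind unfolding indep_cols_def by auto
  then show "c = 0\<^sub>v (length (ws @ [w]))"
    using cL c by (intro eq_vecI) (auto, metis index_vec index_zero_vec(1) less_antisym)
qed

lemma indep_cols_extend:
  assumes ind: "indep_cols d ws" and S: "S \<subseteq> carrier_vec d"
  obtains us where "set us \<subseteq> S" and "indep_cols d (ws @ us)" and "S \<subseteq> cols_span d (ws @ us)"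
proof -
  \<comment> \<open>A longest independent extension by vectors of S exists by the bound on the length; it spans S.\<close>
  define extends where "extends L \<longleftrightarrow> (\<exists>us. length us = L \<and> set us \<subseteq> S \<and> indep_cols d (ws @ us))" for L
  have bound: "L \<le> d" if "extends L" for L
    using that indep_cols_length_le unfolding extends_def by fastforce
  define L where "L = Greatest extends"
  have "extends 0"
    unfolding extends_def using ind by auto
  then have "extends L"
    unfolding L_def by (rule GreatestI_nat[OF _ bound])
  then obtain us where us: "length us = L" "set us \<subseteq> S" "indep_cols d (ws @ us)"
    unfolding extends_def by auto
  have "w \<in> cols_span d (ws @ us)" if w: "w \<in> S" for w
  proof (rule ccontr)
    assume "w \<notin> cols_span d (ws @ us)"
    then have "indep_cols d ((ws @ us) @ [w])"
      using indep_cols_snoc[OF us(3)] w S by auto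
    then have "extends (Suc L)"
      unfolding extends_def using us w by (intro exI[of _ "us @ [w]"]) auto
    then show False
      using Greatest_le_nat[OF _ bound] unfolding L_def by fastforce
  qed
  then show thesis
    using that us by blast
qed

lemma right_inverse_dim_le:
  fixes M R :: "complex mat"
  assumes M: "M \<in> carrier_mat d L" and R: "R \<in> carrier_mat L d" and MR: "M * R = 1\<^sub>m d"
  shows "d \<le> L"
proof (rule ccontr)
  assume "\<not> d \<le> L"
  then have "\<not> indep_cols L (cols R)"
    using indep_cols_length_le[of L "cols R"] R by auto
  moreover have "set (cols R) \<subseteq> carrier_vec L"
    using R cols_dim[of R] by auto
  ultimately obtain c where c: "c \<in> carrier_vec d" "R *\<^sub>v c = 0\<^sub>v L" "c \<noteq> 0\<^sub>v d"
    unfolding indep_cols_def using R mat_of_cols_cols[of R] by auto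
  have "c = (M * R) *\<^sub>v c"
    using MR c by simp
  also have "\<dots> = M *\<^sub>v (R *\<^sub>v c)"
    using M R c by simp
  also have "\<dots> = 0\<^sub>v d"
    using c M by (intro eq_vecI) (auto simp: scalar_prod_def)
  finally show False
    using c by simp
qed

lemma indep_spanning_cols_invertible:
  assumes ind: "indep_cols d vs" and span: "carrier_vec d \<subseteq> cols_span d vs"
  shows "length vs = d"
    and "\<exists>Q \<in> carrier_mat d d. Q * mat_of_cols d vs = 1\<^sub>m d \<and> mat_of_cols d vs * Q = 1\<^sub>m d"
proof -
  define L where "L = length vs"
  define M where "M = mat_of_cols d vs"
  have M: "M \<in> carrier_mat d L"
    unfolding M_def L_def by simp
  define cs where "cs j = (SOME c. c \<in> carrier_vec L \<and> unit_vec d j = M *\<^sub>v c)" for j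
  have cs: "cs j \<in> carrier_vec L \<and> unit_vec d j = M *\<^sub>v cs j" if "j < d" for j
  proof -
    have "unit_vec d j \<in> cols_span d vs"
      using span by auto
    then have "\<exists>c. c \<in> carrier_vec L \<and> unit_vec d j = M *\<^sub>v c"
      unfolding cols_span_def M_def L_def by auto
    then show ?thesis
      unfolding cs_def by (rule someI_ex)
  qed
  define R where "R = mat L d (\<lambda>(i, j). cs j $ i)"
  have R: "R \<in> carrier_mat L d"
    unfolding R_def by simp
  have MR: "M * R = 1\<^sub>m d"
  proof (rule eq_matI)
    fix i j
    assume ij: "i < dim_row (1\<^sub>m d)" "j < dim_col (1\<^sub>m d)"
    have "col R j = cs j"
      using cs[of j] ij unfolding R_def by (intro eq_vecI) auto
    then have "(M * R) $$ (i, j) = (M *\<^sub>v cs j) $ i"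
      using M R ij by simp
    also have "\<dots> = unit_vec d j $ i"
      using cs ij by simp
    finally show "(M * R) $$ (i, j) = 1\<^sub>m d $$ (i, j)"
      using ij by simp
  qed (use M R in auto)
  have "L = d"
    using indep_cols_length_le[OF ind] right_inverse_dim_le[OF M R MR] unfolding L_def by simp
  then show "length vs = d"
    unfolding L_def .
  have "R * M = 1\<^sub>m d"
    using mat_mult_left_right_inverse[of M d R] M R MR \<open>L = d\<close> by simp
  then show "\<exists>Q \<in> carrier_mat d d. Q * mat_of_cols d vs = 1\<^sub>m d \<and> mat_of_cols d vs * Q = 1\<^sub>m d"
    using R MR \<open>L = d\<close> unfolding M_def by auto
qed

lemma mat_of_cols_prefix_coordinates:
  fixes Q :: "complex mat"
  assumes Q: "Q \<in> carrier_mat d d" and QP: "Q * mat_of_cols d (ws @ us) = 1\<^sub>m d"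
    and len: "length (ws @ us) = d" and c: "c \<in> carrier_vec (length ws)"
    and i: "length ws \<le> i" "i < d"
  shows "(Q *\<^sub>v (mat_of_cols d ws *\<^sub>v c)) $ i = 0"
proof -
  define x where "x = c @\<^sub>v 0\<^sub>v (length us)"
  have x: "x \<in> carrier_vec d"
    unfolding x_def using c len by (metis append_carrier_vec length_append zero_carrier_vec)
  have P: "mat_of_cols d (ws @ us) \<in> carrier_mat d d"
    using len by (metis mat_of_cols_carrier(1))
  have "Q *\<^sub>v (mat_of_cols d ws *\<^sub>v c) = Q *\<^sub>v (mat_of_cols d (ws @ us) *\<^sub>v x)"
    unfolding x_def using mat_of_cols_append_mult_vec_zero[OF c] by simp
  also have "\<dots> = x"
    using Q QP P x by (simp flip: assoc_mult_mat_vec)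
  finally show ?thesis
    using i c len unfolding x_def by simp
qed

lemma subspace_adapted_basis:
  assumes W: "vec_subspace d W" and nz: "W \<noteq> {0\<^sub>v d}" and nf: "W \<noteq> carrier_vec d"
  obtains k P Q where "0 < k" and "k < d" and "P \<in> carrier_mat d d" and "Q \<in> carrier_mat d d"
    and "Q * P = 1\<^sub>m d" and "P * Q = 1\<^sub>m d" and "\<And>j. j < k \<Longrightarrow> col P j \<in> W"
    and "\<And>w i. w \<in> W \<Longrightarrow> k \<le> i \<Longrightarrow> i < d \<Longrightarrow> (Q *\<^sub>v w) $ i = 0"
proof -
  have WC: "W \<subseteq> carrier_vec d" and W0: "0\<^sub>v d \<in> W"
    using W unfolding vec_subspace_def by auto
  have "indep_cols d []"
    unfolding indep_cols_def by auto
  then obtain ws where ws: "set ws \<subseteq> W" "indep_cols d ws" "W \<subseteq> cols_span d ws"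
    using indep_cols_extend[OF _ WC] by (metis append_Nil)
  obtain us where us: "indep_cols d (ws @ us)" "carrier_vec d \<subseteq> cols_span d (ws @ us)"
    using indep_cols_extend[OF ws(2) subset_refl] .
  define P where "P = mat_of_cols d (ws @ us)"
  define k where "k = length ws"
  obtain Q where Q: "Q \<in> carrier_mat d d" "Q * P = 1\<^sub>m d" "P * Q = 1\<^sub>m d"
    using indep_spanning_cols_invertible(2)[OF us] unfolding P_def by blast
  have len: "length (ws @ us) = d"
    by (rule indep_spanning_cols_invertible(1)[OF us])
  have P: "P \<in> carrier_mat d d"
    unfolding P_def using len by (metis mat_of_cols_carrier(1))
  have "0 < k"
  proof (rule ccontr)
    assume "\<not> 0 < k"
    then have "mat_of_cols d ws *\<^sub>v c = 0\<^sub>v d" if "c \<in> carrier_vec (length ws)" for c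
      using that unfolding k_def by (intro eq_vecI) (auto simp: mat_of_cols_def scalar_prod_def)
    then have "W \<subseteq> {0\<^sub>v d}"
      using ws(3) unfolding cols_span_def by auto
    then show False
      using W0 nz by auto
  qed
  moreover have "k < d"
  proof (rule ccontr)
    assume "\<not> k < d"
    then have "us = []"
      using len unfolding k_def by (cases us) auto
    then have "carrier_vec d \<subseteq> W"
      using us(2) cols_span_subset_subspace[OF W ws(1)] by simp
    then show False
      using nf WC by auto
  qed
  moreover have "col P j \<in> W" if j: "j < k" for j
  proof -
    have wj: "ws ! j \<in> W"
      using j ws(1) unfolding k_def by auto
    have "col P j = ws ! j"
      unfolding P_def using j len WC wj unfolding k_def
      by (subst col_mat_of_cols) (auto simp: nth_append)
    then show ?thesis
      using wj by simp
  qed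
  moreover have "(Q *\<^sub>v w) $ i = 0" if "w \<in> W" and "k \<le> i" "i < d" for w i
    using ws(3) that mat_of_cols_prefix_coordinates[OF Q(1) Q(2)[unfolded P_def] len]
    unfolding k_def cols_span_def by auto
  ultimately show thesis
    using that P Q by blast
qed

section \<open>Kernels of irreducible characters\<close>

lemma split_block_four_block_mat:
  assumes "A \<in> carrier_mat k m" "B \<in> carrier_mat k m'" "C \<in> carrier_mat k' m" "D \<in> carrier_mat k' m'"
  shows "split_block (four_block_mat A B C D) k m = (A, B, C, D)"
  using assms unfolding split_block_def Let_def by (auto intro!: eq_matI)

lemma four_block_mat_inj:
  assumes "A \<in> carrier_mat k m" "B \<in> carrier_mat k m'" "C \<in> carrier_mat k' m" "D \<in> carrier_mat k' m'"
    and "A' \<in> carrier_mat k m" "B' \<in> carrier_mat k m'" "C' \<in> carrier_mat k' m" "D' \<in> carrier_mat k' m'"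
    and "four_block_mat A B C D = four_block_mat A' B' C' D'"
  shows "A = A' \<and> B = B' \<and> C = C' \<and> D = D'"
  using arg_cong[OF assms(9), of "\<lambda>M. split_block M k m"]
  by (simp add: split_block_four_block_mat[OF assms(1-4)] split_block_four_block_mat[OF assms(5-8)])

lemma four_block_mat_eq_one_mat:
  assumes "A \<in> carrier_mat k k" "B \<in> carrier_mat k l" "D \<in> carrier_mat l l"
    and "four_block_mat A B (0\<^sub>m l k) D = 1\<^sub>m (k + l)"
  shows "A = 1\<^sub>m k \<and> D = 1\<^sub>m l"
  using four_block_mat_inj[OF assms(1,2) zero_carrier_mat assms(3) one_carrier_mat zero_carrier_mat
      zero_carrier_mat one_carrier_mat assms(4)[folded four_block_one_mat]]
  by simp

lemma four_block_mat_upper_mult: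
  fixes A1 :: "'a :: semiring_1 mat"
  assumes "A1 \<in> carrier_mat k k" "A2 \<in> carrier_mat k k" "B1 \<in> carrier_mat k l" "B2 \<in> carrier_mat k l"
    "C1 \<in> carrier_mat l l" "C2 \<in> carrier_mat l l"
  shows "four_block_mat A1 B1 (0\<^sub>m l k) C1 * four_block_mat A2 B2 (0\<^sub>m l k) C2 =
    four_block_mat (A1 * A2) (A1 * B2 + B1 * C2) (0\<^sub>m l k) (C1 * C2)"
proof -
  have "four_block_mat A1 B1 (0\<^sub>m l k) C1 * four_block_mat A2 B2 (0\<^sub>m l k) C2 =
    four_block_mat (A1 * A2 + B1 * 0\<^sub>m l k) (A1 * B2 + B1 * C2)
      (0\<^sub>m l k * A2 + C1 * 0\<^sub>m l k) (0\<^sub>m l k * B2 + C1 * C2)"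
    using assms by (intro mult_four_block_mat) auto
  also have "\<dots> = four_block_mat (A1 * A2) (A1 * B2 + B1 * C2) (0\<^sub>m l k) (C1 * C2)"
    using assms by (intro cong_four_block_mat)
      (auto simp: right_mult_zero_mat[of _ k l] left_mult_zero_mat[of _ k] right_mult_zero_mat[of _ l l]
        left_mult_zero_mat[of _ k l])
  finally show ?thesis .
qed

lemma four_block_mat_of_lower_left_zero:
  assumes T: "T \<in> carrier_mat (k + l) (k + l)"
    and zero: "\<And>i j. k \<le> i \<Longrightarrow> i < k + l \<Longrightarrow> j < k \<Longrightarrow> T $$ (i, j) = 0"
  shows "T = four_block_mat (mat k k (\<lambda>(i, j). T $$ (i, j))) (mat k l (\<lambda>(i, j). T $$ (i, j + k)))
    (0\<^sub>m l k) (mat l l (\<lambda>(i, j). T $$ (i + k, j + k)))" (is "T = ?F")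
proof (rule eq_matI)
  fix i j
  assume "i < dim_row ?F" "j < dim_col ?F"
  then show "T $$ (i, j) = ?F $$ (i, j)"
    using zero[of i j] by auto
qed (use T in auto)

definition perm_mat :: "nat \<Rightarrow> (nat \<Rightarrow> 's) \<Rightarrow> ('s \<Rightarrow> 's) \<Rightarrow> complex mat" where
  "perm_mat n f \<alpha> = mat n n (\<lambda>(i, j). if \<alpha> (f j) = f i then 1 else 0)"

lemma perm_mat_eq_one_mat_iff:
  assumes f: "bij_betw f {0..<n} S"
  shows "perm_mat n f \<alpha> = 1\<^sub>m n \<longleftrightarrow> (\<forall>s\<in>S. \<alpha> s = s)"
proof
  assume e: "perm_mat n f \<alpha> = 1\<^sub>m n"
  show "\<forall>s\<in>S. \<alpha> s = s"
  proof
    fix s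
    assume "s \<in> S"
    then obtain j where j: "j \<in> {0..<n}" "s = f j"
      unfolding bij_betw_imp_surj_on[OF f, symmetric] by blast
    have "perm_mat n f \<alpha> $$ (j, j) = 1"
      using e j by simp
    then show "\<alpha> s = s"
      using j unfolding perm_mat_def by (auto split: if_splits)
  qed
next
  assume fixes_all: "\<forall>s\<in>S. \<alpha> s = s"
  have "f i = f j \<longleftrightarrow> i = j" if "i < n" "j < n" for i j
    using bij_betw_imp_inj_on[OF f] that by (auto dest: inj_onD)
  then show "perm_mat n f \<alpha> = 1\<^sub>m n"
    unfolding perm_mat_def using fixes_all bij_betw_apply[OF f] by (intro eq_matI) auto
qed

lemma perm_mat_mult:
  assumes f: "bij_betw f {0..<n} S" and \<beta>: "\<And>s. s \<in> S \<Longrightarrow> \<beta> s \<in> S"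
    and \<gamma>: "\<And>s. s \<in> S \<Longrightarrow> \<gamma> s = \<alpha> (\<beta> s)"
  shows "perm_mat n f \<gamma> = perm_mat n f \<alpha> * perm_mat n f \<beta>"
proof -
  have f_in: "f j \<in> S" if "j < n" for j
    using bij_betw_apply[OF f] that by simp
  have f_inj: "f i = f j \<longleftrightarrow> i = j" if "i < n" "j < n" for i j
    using bij_betw_imp_inj_on[OF f] that by (auto dest: inj_onD)
  show ?thesis
  proof (rule eq_matI)
    fix i j
    assume "i < dim_row (perm_mat n f \<alpha> * perm_mat n f \<beta>)" "j < dim_col (perm_mat n f \<alpha> * perm_mat n f \<beta>)"
    then have i: "i < n" and j: "j < n"
      unfolding perm_mat_def by auto
    obtain l0 where l0: "l0 \<in> {0..<n}" "\<beta> (f j) = f l0"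
      using \<beta>[OF f_in[OF j]] unfolding bij_betw_imp_surj_on[OF f, symmetric] by blast
    have "(perm_mat n f \<alpha> * perm_mat n f \<beta>) $$ (i, j) =
        (\<Sum>l\<in>{0..<n}. perm_mat n f \<alpha> $$ (i, l) * perm_mat n f \<beta> $$ (l, j))"
      using i j unfolding perm_mat_def by (simp add: scalar_prod_def)
    also have "\<dots> = (\<Sum>l\<in>{0..<n}. if l = l0 then perm_mat n f \<alpha> $$ (i, l0) else 0)"
    proof (rule sum.cong[OF refl])
      fix l
      assume "l \<in> {0..<n}"
      then have l: "l < n" by simp
      have "\<beta> (f j) = f l \<longleftrightarrow> l = l0"
        using f_inj[of l l0] l l0 by auto
      then show "perm_mat n f \<alpha> $$ (i, l) * perm_mat n f \<beta> $$ (l, j) =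
          (if l = l0 then perm_mat n f \<alpha> $$ (i, l0) else 0)"
        using i j l unfolding perm_mat_def by auto
    qed
    also have "\<dots> = perm_mat n f \<gamma> $$ (i, j)"
      using i j l0 \<gamma>[OF f_in[OF j]] unfolding perm_mat_def by simp
    finally show "perm_mat n f \<gamma> $$ (i, j) = (perm_mat n f \<alpha> * perm_mat n f \<beta>) $$ (i, j)" ..
  qed (simp_all add: perm_mat_def)
qed

context group
begin

lemma is_rep_conjugate:
  assumes r: "is_rep G n \<rho>" and P: "P \<in> carrier_mat n n" and Q: "Q \<in> carrier_mat n n"
    and QP: "Q * P = 1\<^sub>m n" and PQ: "P * Q = 1\<^sub>m n"
  shows "is_rep G n (\<lambda>x. Q * \<rho> x * P)"
  unfolding is_rep_def
proof (intro conjI ballI)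
  fix x
  assume "x \<in> carrier G"
  then show "Q * \<rho> x * P \<in> carrier_mat n n"
    using P Q is_rep_carrier[OF r] by auto
next
  show "Q * \<rho> \<one> * P = 1\<^sub>m n"
    using Q QP is_rep_one[OF r] by simp
next
  fix x y
  assume x: "x \<in> carrier G" and y: "y \<in> carrier G"
  have rx: "\<rho> x \<in> carrier_mat n n" and ry: "\<rho> y \<in> carrier_mat n n"
    using is_rep_carrier[OF r] x y by auto
  have Qx: "Q * \<rho> x \<in> carrier_mat n n" and yP: "\<rho> y * P \<in> carrier_mat n n"
    using Q P rx ry by auto
  have "Q * \<rho> x * P * (Q * \<rho> y * P) = (Q * \<rho> x) * (P * (Q * (\<rho> y * P)))"
    using assoc_mult_mat[OF Q ry P] assoc_mult_mat[OF Qx P mult_carrier_mat[OF Q yP]] by simp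
  also have "P * (Q * (\<rho> y * P)) = \<rho> y * P"
    using assoc_mult_mat[OF P Q yP, symmetric] PQ left_mult_one_mat[OF yP] by simp
  also have "(Q * \<rho> x) * (\<rho> y * P) = Q * (\<rho> x * \<rho> y) * P"
    using assoc_mult_mat[OF Qx ry P, symmetric] assoc_mult_mat[OF Q rx ry] by simp
  finally show "Q * \<rho> (x \<otimes> y) * P = Q * \<rho> x * P * (Q * \<rho> y * P)"
    using is_rep_mult[OF r x y] by simp
qed

lemma block_triangular_is_rep:
  assumes T: "is_rep G (k + l) T"
    and blk: "\<And>x. x \<in> carrier G \<Longrightarrow> A x \<in> carrier_mat k k \<and> B x \<in> carrier_mat k l \<and>
      C x \<in> carrier_mat l l \<and> T x = four_block_mat (A x) (B x) (0\<^sub>m l k) (C x)"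
  shows "is_rep G k A" and "is_rep G l C"
proof -
  have one: "A \<one> = 1\<^sub>m k \<and> C \<one> = 1\<^sub>m l"
    using blk[OF one_closed] is_rep_one[OF T] four_block_mat_eq_one_mat by metis
  have mult: "A (x \<otimes> y) = A x * A y \<and> C (x \<otimes> y) = C x * C y"
    if x: "x \<in> carrier G" and y: "y \<in> carrier G" for x y
  proof -
    have xy: "x \<otimes> y \<in> carrier G"
      using x y by simp
    have "four_block_mat (A (x \<otimes> y)) (B (x \<otimes> y)) (0\<^sub>m l k) (C (x \<otimes> y)) = T x * T y"
      using blk[OF xy] is_rep_mult[OF T x y] by simp
    also have "\<dots> = four_block_mat (A x * A y) (A x * B y + B x * C y) (0\<^sub>m l k) (C x * C y)"
      using blk[OF x] blk[OF y] by (simp add: four_block_mat_upper_mult)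
    finally have e: "four_block_mat (A (x \<otimes> y)) (B (x \<otimes> y)) (0\<^sub>m l k) (C (x \<otimes> y)) =
      four_block_mat (A x * A y) (A x * B y + B x * C y) (0\<^sub>m l k) (C x * C y)" .
    have blk_xy: "A (x \<otimes> y) \<in> carrier_mat k k" "B (x \<otimes> y) \<in> carrier_mat k l" "C (x \<otimes> y) \<in> carrier_mat l l"
      using blk[OF xy] by auto
    have prods: "A x * A y \<in> carrier_mat k k" "A x * B y + B x * C y \<in> carrier_mat k l"
      "C x * C y \<in> carrier_mat l l"
      using blk[OF x] blk[OF y] by auto
    show ?thesis
      using four_block_mat_inj[OF blk_xy(1,2) zero_carrier_mat blk_xy(3) prods(1,2) zero_carrier_mat prods(3) e]
      by simp
  qed
  show "is_rep G k A" "is_rep G l C"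
    using blk one mult unfolding is_rep_def by auto
qed

lemma reducible_rep_block_triangular:
  assumes r: "is_rep G d \<rho>" and W: "invariant_subspace G d \<rho> W"
    and nz: "W \<noteq> {0\<^sub>v d}" and nf: "W \<noteq> carrier_vec d"
  obtains k l P Q A B C where "0 < k" and "0 < l" and "d = k + l"
    and "P \<in> carrier_mat d d" and "Q \<in> carrier_mat d d" and "Q * P = 1\<^sub>m d" and "P * Q = 1\<^sub>m d"
    and "is_rep G k A"
    and "\<And>x. x \<in> carrier G \<Longrightarrow>
      B x \<in> carrier_mat k l \<and> Q * \<rho> x * P = four_block_mat (A x) (B x) (0\<^sub>m l k) (C x)"
    and "is_rep G l C"
proof -
  have sub: "vec_subspace d W" and inv: "\<And>x w. x \<in> carrier G \<Longrightarrow> w \<in> W \<Longrightarrow> \<rho> x *\<^sub>v w \<in> W"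
    using W unfolding invariant_subspace_def vec_subspace_def by auto
  obtain k P Q where k: "0 < k" "k < d" and P: "P \<in> carrier_mat d d" and Q: "Q \<in> carrier_mat d d"
    and QP: "Q * P = 1\<^sub>m d" and PQ: "P * Q = 1\<^sub>m d" and colP: "\<And>j. j < k \<Longrightarrow> col P j \<in> W"
    and coord: "\<And>w i. w \<in> W \<Longrightarrow> k \<le> i \<Longrightarrow> i < d \<Longrightarrow> (Q *\<^sub>v w) $ i = 0"
    using subspace_adapted_basis[OF sub nz nf] by blast
  define l where "l = d - k"
  define T where "T x = Q * \<rho> x * P" for x
  define A where "A x = mat k k (\<lambda>(i, j). T x $$ (i, j))" for x
  define B where "B x = mat k l (\<lambda>(i, j). T x $$ (i, j + k))" for x
  define C where "C x = mat l l (\<lambda>(i, j). T x $$ (i + k, j + k))" for x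
  have d: "d = k + l"
    using k unfolding l_def by simp
  have T: "is_rep G (k + l) T"
    using is_rep_conjugate[OF r P Q QP PQ] unfolding T_def d .
  have lower: "T x $$ (i, j) = 0" if x: "x \<in> carrier G" and i: "k \<le> i" "i < k + l" and j: "j < k"
    for x i j
  proof -
    \<comment> \<open>\<rho> x maps the j-th column of P, which lies in W, back into W\<close>
    have rx: "\<rho> x \<in> carrier_mat d d"
      by (rule is_rep_carrier[OF r x])
    have "T x $$ (i, j) = row (Q * \<rho> x) i \<bullet> col P j"
      unfolding T_def using i(2) j k(2) P Q rx d by (subst index_mult_mat(1)) auto
    also have "\<dots> = ((Q * \<rho> x) *\<^sub>v col P j) $ i"
      using i(2) P Q rx d by (subst index_mult_mat_vec) auto
    also have "\<dots> = (Q *\<^sub>v (\<rho> x *\<^sub>v col P j)) $ i"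
      using assoc_mult_mat_vec[OF Q rx] P carrier_vec_dim_vec[of "col P j"] by simp
    also have "\<dots> = 0"
      using coord inv[OF x colP[OF j]] i d by auto
    finally show ?thesis .
  qed
  have blk: "A x \<in> carrier_mat k k \<and> B x \<in> carrier_mat k l \<and> C x \<in> carrier_mat l l \<and>
      T x = four_block_mat (A x) (B x) (0\<^sub>m l k) (C x)" if x: "x \<in> carrier G" for x
    unfolding A_def B_def C_def
    using four_block_mat_of_lower_left_zero[OF is_rep_carrier[OF T x] lower[OF x]] by auto
  show thesis
  proof (rule that[of k l P Q A B C])
    show "is_rep G k A" "is_rep G l C"
      using block_triangular_is_rep[OF T blk] by auto
  qed (use k d P Q QP PQ blk in \<open>auto simp: T_def\<close>)
qed

lemma reducible_rep_kernel_split: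
  assumes fin: "finite (carrier G)" and r: "is_rep G d \<rho>"
    and red: "\<not> irreducible_rep G d \<rho>" and d: "0 < d"
  obtains k A l C where "k < d" and "is_rep G k A" and "l < d" and "is_rep G l C"
    and "\<And>x. x \<in> carrier G \<Longrightarrow> \<rho> x = 1\<^sub>m d \<longleftrightarrow> A x = 1\<^sub>m k \<and> C x = 1\<^sub>m l"
proof -
  obtain W where W: "invariant_subspace G d \<rho> W" "W \<noteq> {0\<^sub>v d}" "W \<noteq> carrier_vec d"
    using red r d unfolding irreducible_rep_def by auto
  obtain k l P Q A B C where kl: "0 < k" "0 < l" "d = k + l"
    and P: "P \<in> carrier_mat d d" and Q: "Q \<in> carrier_mat d d"
    and QP: "Q * P = 1\<^sub>m d" and PQ: "P * Q = 1\<^sub>m d"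
    and A: "is_rep G k A"
    and blk: "\<And>x. x \<in> carrier G \<Longrightarrow>
      B x \<in> carrier_mat k l \<and> Q * \<rho> x * P = four_block_mat (A x) (B x) (0\<^sub>m l k) (C x)"
    and C: "is_rep G l C"
    using reducible_rep_block_triangular[OF r W] by blast
  have "\<rho> x = 1\<^sub>m d \<longleftrightarrow> A x = 1\<^sub>m k \<and> C x = 1\<^sub>m l" if x: "x \<in> carrier G" for x
  proof
    assume "\<rho> x = 1\<^sub>m d"
    then have "four_block_mat (A x) (B x) (0\<^sub>m l k) (C x) = 1\<^sub>m (k + l)"
      using blk[OF x] Q QP kl(3) by simp
    then show "A x = 1\<^sub>m k \<and> C x = 1\<^sub>m l"
      using four_block_mat_eq_one_mat is_rep_carrier[OF A x] is_rep_carrier[OF C x] blk[OF x] by blast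
  next
    assume "A x = 1\<^sub>m k \<and> C x = 1\<^sub>m l"
    then have "Q * \<rho> x * P = four_block_mat (1\<^sub>m k) (B x) (0\<^sub>m l k) (1\<^sub>m l)"
      using blk[OF x] by simp
    then have "mat_trace (\<rho> x) = of_nat d"
      using mat_trace_conjugate[OF is_rep_carrier[OF r x] Q P PQ] kl(3)
      by (simp add: mat_trace_four_block_mat[OF one_carrier_mat one_carrier_mat])
    then show "\<rho> x = 1\<^sub>m d"
      using is_rep_eq_one_mat_iff[OF r x fin] by simp
  qed
  then show thesis
    using that[of k A l C] kl A C by auto
qed

lemma irreducible_constituent_nontrivial:
  assumes fin: "finite (carrier G)" and h: "h \<in> carrier G"
    and r: "is_rep G d \<rho>" and nontriv: "\<rho> h \<noteq> 1\<^sub>m d"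
  shows "\<exists>d' \<sigma>. irreducible_rep G d' \<sigma> \<and> \<sigma> h \<noteq> 1\<^sub>m d' \<and>
    (\<forall>x\<in>carrier G. \<rho> x = 1\<^sub>m d \<longrightarrow> \<sigma> x = 1\<^sub>m d')"
  using r nontriv
proof (induct d arbitrary: \<rho> rule: less_induct)
  case (less d)
  note r = less.prems(1) and nontriv = less.prems(2)
  show ?case
  proof (cases "irreducible_rep G d \<rho>")
    case True
    then show ?thesis
      using nontriv by blast
  next
    case False
    have "0 < d"
    proof (rule ccontr)
      assume "\<not> 0 < d"
      then have "\<rho> h = 1\<^sub>m d"
        using is_rep_carrier[OF r h] by (intro eq_matI) auto
      with nontriv show False ..
    qed
    then obtain k A l C where k: "k < d" "is_rep G k A" and l: "l < d" "is_rep G l C"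
      and ker: "\<And>x. x \<in> carrier G \<Longrightarrow> \<rho> x = 1\<^sub>m d \<longleftrightarrow> A x = 1\<^sub>m k \<and> C x = 1\<^sub>m l"
      by (rule reducible_rep_kernel_split[OF fin r False]) blast+
    have "A h \<noteq> 1\<^sub>m k \<or> C h \<noteq> 1\<^sub>m l"
      using ker[OF h] nontriv by blast
    then show ?thesis
    proof
      assume "A h \<noteq> 1\<^sub>m k"
      then obtain d' \<sigma> where "irreducible_rep G d' \<sigma>" "\<sigma> h \<noteq> 1\<^sub>m d'"
        "\<forall>x\<in>carrier G. A x = 1\<^sub>m k \<longrightarrow> \<sigma> x = 1\<^sub>m d'"
        using less.hyps[OF k] by blast
      then show ?thesis
        using ker by blast
    next
      assume "C h \<noteq> 1\<^sub>m l"
      then obtain d' \<sigma> where "irreducible_rep G d' \<sigma>" "\<sigma> h \<noteq> 1\<^sub>m d'"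
        "\<forall>x\<in>carrier G. C x = 1\<^sub>m l \<longrightarrow> \<sigma> x = 1\<^sub>m d'"
        using less.hyps[OF l] by blast
      then show ?thesis
        using ker by blast
    qed
  qed
qed

lemma permutation_rep:
  assumes fin: "finite S"
    and closed: "\<And>x s. x \<in> carrier G \<Longrightarrow> s \<in> S \<Longrightarrow> \<phi> x s \<in> S"
    and act_one: "\<And>s. s \<in> S \<Longrightarrow> \<phi> \<one> s = s"
    and act_mult: "\<And>x y s. x \<in> carrier G \<Longrightarrow> y \<in> carrier G \<Longrightarrow> s \<in> S \<Longrightarrow> \<phi> (x \<otimes> y) s = \<phi> x (\<phi> y s)"
  shows "\<exists>n \<rho>. is_rep G n \<rho> \<and> (\<forall>x\<in>carrier G. \<rho> x = 1\<^sub>m n \<longleftrightarrow> (\<forall>s\<in>S. \<phi> x s = s))"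
proof -
  obtain f where f: "bij_betw f {0..<card S} S"
    using ex_bij_betw_nat_finite[OF fin] by blast
  have "is_rep G (card S) (\<lambda>x. perm_mat (card S) f (\<phi> x))"
    unfolding is_rep_def
  proof (intro conjI ballI)
    show "perm_mat (card S) f (\<phi> x) \<in> carrier_mat (card S) (card S)" for x
      unfolding perm_mat_def by simp
    show "perm_mat (card S) f (\<phi> \<one>) = 1\<^sub>m (card S)"
      using perm_mat_eq_one_mat_iff[OF f] act_one by simp
  next
    fix x y
    assume "x \<in> carrier G" "y \<in> carrier G"
    then show "perm_mat (card S) f (\<phi> (x \<otimes> y)) = perm_mat (card S) f (\<phi> x) * perm_mat (card S) f (\<phi> y)"
      by (intro perm_mat_mult[OF f]) (auto intro: closed act_mult)
  qed
  then show ?thesis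
    using perm_mat_eq_one_mat_iff[OF f] by blast
qed

lemma normal_subgroup_is_rep_kernel:
  assumes fin: "finite (carrier G)" and N: "N \<lhd> G"
  shows "\<exists>n \<rho>. is_rep G n \<rho> \<and> {x \<in> carrier G. \<rho> x = 1\<^sub>m n} = N"
proof -
  interpret N: normal N G by (rule N)
  have sub: "subgroup N G"
    using N normal_imp_subgroup by blast
  define \<phi> where "\<phi> x C = (N #> x) <#> C" for x C
  have \<phi>: "\<phi> x (N #> a) = N #> (x \<otimes> a)" if "x \<in> carrier G" "a \<in> carrier G" for x a
    unfolding \<phi>_def using N.rcos_sum that by simp
  have cosets: "rcosets N = (\<lambda>a. N #> a) ` carrier G"
    unfolding RCOSETS_def by auto
  have fixes_all: "(\<forall>C\<in>rcosets N. \<phi> x C = C) \<longleftrightarrow> x \<in> N" if x: "x \<in> carrier G" for x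
  proof
    assume "\<forall>C\<in>rcosets N. \<phi> x C = C"
    then have "\<phi> x (N #> \<one>) = N #> \<one>"
      unfolding cosets by blast
    then have "N #> x = N"
      using \<phi>[OF x one_closed] x N.subset by simp
    then show "x \<in> N"
      using rcos_self[OF x sub] by simp
  next
    assume xN: "x \<in> N"
    have "\<phi> x (N #> a) = N #> a" if a: "a \<in> carrier G" for a
      using \<phi>[OF x a] coset_mult_assoc[OF N.subset x a] coset_join2[OF x sub xN] by simp
    then show "\<forall>C\<in>rcosets N. \<phi> x C = C"
      unfolding cosets by blast
  qed
  have coset: "\<exists>a\<in>carrier G. C = N #> a" if "C \<in> rcosets N" for C
    using that unfolding cosets by auto
  have "\<exists>n \<rho>. is_rep G n \<rho> \<and> (\<forall>x\<in>carrier G. \<rho> x = 1\<^sub>m n \<longleftrightarrow> (\<forall>C\<in>rcosets N. \<phi> x C = C))"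
  proof (rule permutation_rep)
    show "finite (rcosets N)"
      unfolding cosets using fin by simp
  next
    fix x C
    assume x: "x \<in> carrier G" and "C \<in> rcosets N"
    then obtain a where a: "a \<in> carrier G" "C = N #> a"
      using coset by blast
    show "\<phi> x C \<in> rcosets N"
      unfolding cosets a(2) \<phi>[OF x a(1)] using x a(1) by blast
  next
    fix C
    assume "C \<in> rcosets N"
    then obtain a where a: "a \<in> carrier G" "C = N #> a"
      using coset by blast
    show "\<phi> \<one> C = C"
      unfolding a(2) \<phi>[OF one_closed a(1)] using a(1) by simp
  next
    fix x y C
    assume x: "x \<in> carrier G" and y: "y \<in> carrier G" and "C \<in> rcosets N"
    then obtain a where a: "a \<in> carrier G" "C = N #> a"
      using coset by blast
    show "\<phi> (x \<otimes> y) C = \<phi> x (\<phi> y C)"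
      unfolding a(2) using \<phi> x y a(1) by (simp add: m_assoc)
  qed
  then obtain n \<rho> where r: "is_rep G n \<rho>"
    and ker: "\<forall>x\<in>carrier G. \<rho> x = 1\<^sub>m n \<longleftrightarrow> (\<forall>C\<in>rcosets N. \<phi> x C = C)"
    by blast
  have "{x \<in> carrier G. \<rho> x = 1\<^sub>m n} = N"
    using ker fixes_all N.subset by auto
  with r show ?thesis
    by blast
qed

lemma normal_subgroup_eq_Inter_char_ker:
  assumes fin: "finite (carrier G)" and N: "N \<lhd> G"
  shows "carrier G \<inter> (\<Inter>\<chi> \<in> Irr_quot G N. char_ker G \<chi>) = N"
proof
  show "N \<subseteq> carrier G \<inter> (\<Inter>\<chi> \<in> Irr_quot G N. char_ker G \<chi>)"
    using normal_imp_subgroup[OF N] subgroup.subset unfolding Irr_quot_def by blast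
next
  show "carrier G \<inter> (\<Inter>\<chi> \<in> Irr_quot G N. char_ker G \<chi>) \<subseteq> N"
  proof
    fix h
    assume h: "h \<in> carrier G \<inter> (\<Inter>\<chi> \<in> Irr_quot G N. char_ker G \<chi>)"
    show "h \<in> N"
    proof (rule ccontr)
      assume "h \<notin> N"
      have hG: "h \<in> carrier G"
        using h by simp
      obtain n \<rho> where r: "is_rep G n \<rho>" and ker: "{x \<in> carrier G. \<rho> x = 1\<^sub>m n} = N"
        using normal_subgroup_is_rep_kernel[OF fin N] by blast
      have "\<rho> h \<noteq> 1\<^sub>m n"
      proof
        assume "\<rho> h = 1\<^sub>m n"
        with hG have "h \<in> {x \<in> carrier G. \<rho> x = 1\<^sub>m n}"
          by simp
        with ker \<open>h \<notin> N\<close> show False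
          by simp
      qed
      then obtain d \<sigma> where irr: "irreducible_rep G d \<sigma>" and nontriv: "\<sigma> h \<noteq> 1\<^sub>m d"
        and N_ker: "\<forall>x\<in>carrier G. \<rho> x = 1\<^sub>m n \<longrightarrow> \<sigma> x = 1\<^sub>m d"
        using irreducible_constituent_nontrivial[OF fin hG r] by blast
      have s: "is_rep G d \<sigma>"
        using irr unfolding irreducible_rep_def by simp
      have "N \<subseteq> char_ker G (character G \<sigma>)"
        unfolding char_ker_character[OF s fin] ker[symmetric] using N_ker by auto
      then have "character G \<sigma> \<in> Irr_quot G N"
        using irr unfolding Irr_quot_def Irr_def by auto
      then have "h \<in> char_ker G (character G \<sigma>)"
        using h by blast
      with nontriv show False
        unfolding char_ker_character[OF s fin] by simp
    qed
  qed
qed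

lemma normal_generate_conj_closed:
  assumes S: "S \<subseteq> carrier G"
    and conj: "\<And>s y. s \<in> S \<Longrightarrow> y \<in> carrier G \<Longrightarrow> y \<otimes> s \<otimes> inv y \<in> generate G S"
  shows "generate G S \<lhd> G"
proof (rule normal_invI[OF generate_is_subgroup[OF S]])
  fix y h
  assume y: "y \<in> carrier G" and h: "h \<in> generate G S"
  from h show "y \<otimes> h \<otimes> inv y \<in> generate G S"
  proof (induct h rule: generate.induct)
    case one
    then show ?case
      using y generate.one by simp
  next
    case (incl h)
    then show ?case
      using conj y by blast
  next
    case (inv h)
    have "h \<in> carrier G"
      using inv S by auto
    then have "y \<otimes> inv h \<otimes> inv y = inv (y \<otimes> h \<otimes> inv y)"
      using y by (simp add: inv_mult_group m_assoc)
    then show ?case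
      using generate_m_inv_closed[OF S conj[OF inv y]] by simp
  next
    case (eng h1 h2)
    have "h1 \<in> carrier G" "h2 \<in> carrier G"
      using eng(1,3) generate_in_carrier[OF S] by auto
    then have "y \<otimes> (h1 \<otimes> h2) \<otimes> inv y = (y \<otimes> h1 \<otimes> inv y) \<otimes> (y \<otimes> h2 \<otimes> inv y)"
      using y by (simp add: m_assoc)
    then show ?case
      using generate.eng[OF eng(2,4)] by simp
  qed
qed

lemma comm_sub_normal:
  assumes g: "g \<in> carrier G"
  shows "comm_sub G g \<lhd> G"
  unfolding comm_sub_def
proof (rule normal_generate_conj_closed)
  show "{grp_comm G g x | x. x \<in> carrier G} \<subseteq> carrier G"
    using g by auto
next
  fix s y
  assume "s \<in> {grp_comm G g x | x. x \<in> carrier G}" and y: "y \<in> carrier G"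
  then obtain x where x: "x \<in> carrier G" and s: "s = grp_comm G g x"
    by auto
  have "y \<otimes> s \<otimes> inv y = inv (grp_comm G g (inv y)) \<otimes> grp_comm G g (x \<otimes> inv y)"
    unfolding s grp_comm_def using g x y by (simp add: m_assoc inv_mult_group)
  moreover have "inv (grp_comm G g (inv y)) \<in> generate G {grp_comm G g x | x. x \<in> carrier G}"
    using y by (intro generate.inv) auto
  moreover have "grp_comm G g (x \<otimes> inv y) \<in> generate G {grp_comm G g x | x. x \<in> carrier G}"
    using x y by (intro generate.incl) auto
  ultimately show "y \<otimes> s \<otimes> inv y \<in> generate G {grp_comm G g x | x. x \<in> carrier G}"
    using generate.eng by simp
qed

lemma K_grp_eq_Inter_comm_sub:
  assumes fin: "finite (carrier G)" and nonabelian: "\<not> comm_group G"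
  shows "K_grp G = (\<Inter>g \<in> carrier G - grp_center G. comm_sub G g)"
proof -
  have "carrier G - grp_center G \<noteq> {}"
  proof
    assume "carrier G - grp_center G = {}"
    then have "comm_group G"
      unfolding grp_center_def by (intro group_comm_groupI) auto
    with nonabelian show False ..
  qed
  then have "K_grp G = (\<Inter>g \<in> carrier G - grp_center G.
      carrier G \<inter> (\<Inter>\<chi> \<in> Irr_quot G (comm_sub G g). char_ker G \<chi>))"
    unfolding K_grp_def Xset_eq_Union_Irr_quot[OF fin] by auto
  also have "\<dots> = (\<Inter>g \<in> carrier G - grp_center G. comm_sub G g)"
    using normal_subgroup_eq_Inter_char_ker[OF fin comm_sub_normal] by simp
  finally show ?thesis .
qed

end

theorem lemma2p5:
  fixes G :: "('a, 'b) monoid_scheme"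
  assumes "group G" and "finite (carrier G)" and "\<not> comm_group G"
  shows "Xset G = (\<Union>g \<in> carrier G - grp_center G. Irr_quot G (comm_sub G g)) \<and>
         K_grp G = (\<Inter>g \<in> carrier G - grp_center G. comm_sub G g)"
  using group.Xset_eq_Union_Irr_quot[OF assms(1,2)] group.K_grp_eq_Inter_comm_sub[OF assms]
  by blast

end
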